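(* Let $\alpha\in\mathbb{R}$, let $\Theta\in\mathcal{P}'_{J_q,[\alpha,\infty)}$, and let $\Theta=[\Theta_{jk}]_{j,k=1}^2$ be the $q\times q$ block representation of $\Theta$. Then: (a) The function $\det\Theta$ does not vanish identically and the matrix-valued function $\Theta^{-1}$ is meromorphic in $\mathbb{C}\setminus[\alpha,\infty)$. (b) Let $f$ be a $q\times q$ matrix-valued function meromorphic in $\mathbb{C}\setminus[\alpha,\infty)$. Suppose that there is a discrete subset $\mathcal{D}$ of $\mathbb{C}\setminus[\alpha,\infty)$ such that $f$ and $\Theta$ are holomorphic in $\mathbb{C}\setminus([\alpha,\infty)\cup\mathcal{D})$, that $\det\Theta(z)\ne0$ for each $z\in\mathbb{C}\setminus([\alpha,\infty)\cup\mathcal{D})$, and that \[ \begin{pmatrix}f(z)\\ I_q\end{pmatrix}^*\Theta^{-*}(z)\Big(\frac{-J_q}{2\operatorname{Im}z}\Big)\Theta^{-1}(z)\begin{pmatrix}f(z)\\ I_q\end{pmatrix}\succeq 0 \] and \[ \begin{pmatrix}f(z)\\ I_q\end{pmatrix}^*\Theta^{-*}(z)\big(\operatorname{diag}[(z-\alpha)I_q,I_q]\big)^*\Big(\frac{-J_q}{2\operatorname{Im}z}\Big)\big(\operatorname{diag}[(z-\alpha)I_q,I_q]\big)\Theta^{-1}(z)\begin{pmatrix}f(z)\\ I_q\end{pmatrix}\succeq 0 \] for each $z\in\mathbb{C}\setminus(\mathbb{R}\cup\mathcal{D})$. For every such discrete subset $\mathcal{D}$ there exists a pair $\begin{pmatrix}\phi\\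 \psi\end{pmatrix}\in\mathcal{P}_{q,[\alpha,\infty)}$ such that $\phi$ and $\psi$ are holomorphic in $\mathbb{C}\setminus([\alpha,\infty)\cup\mathcal{D})$ and that $\det[\Theta_{21}(z)\phi(z)+\Theta_{22}(z)\psi(z)]\ne0$ and $f(z)=[\Theta_{11}(z)\phi(z)+\Theta_{12}(z)\psi(z)][\Theta_{21}(z)\phi(z)+\Theta_{22}(z)\psi(z)]^{-1}$ hold true for each $z\in\mathbb{C}\setminus([\alpha,\infty)\cup\mathcal{D})$. (c) Let $\begin{pmatrix}\phi\\ \psi\end{pmatrix}\in\mathcal{P}_{q,[\alpha,\infty)}$ be such that $\det(\Theta_{21}\phi+\Theta_{22}\psi)$ does not vanish identically. Then there exists a discrete subset $\mathcal{D}$ of $\mathbb{C}\setminus[\alpha,\infty)$ such that: (I) $\Theta$, $\phi$, $\psi$ are holomorphic in $\mathbb{C}\setminus([\alpha,\infty)\cup\mathcal{D})$; (II) $\det\Theta(z)\ne0$ and $\det[\Theta_{21}(z)\phi(z)+\Theta_{22}(z)\psi(z)]\ne0$ for each $z\in\mathbb{C}\setminus([\alpha,\infty)\cup\mathcal{D})$; (III) the function $f:=(\Theta_{11}\phi+\Theta_{12}\psi)(\Theta_{21}\phi+\Theta_{22}\psi)^{-1}$ is holomorphic in $\mathbb{C}\setminus([\alpha,\infty)\cup\mathcal{D})$, the two inequalities displayed in (b) hold for each $z\in\mathbb{C}\setminus(\mathbb{R}\cup\mathcal{D})$, and $f(z)=[\Theta_{11}(z)\phi(z)+\Theta_{12}(z)\psi(z)][\Theta_{21}(z)\phi(z)+\Theta_{22}(z)\psi(z)]^{-1}$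 for each $z\in\mathbb{C}\setminus([\alpha,\infty)\cup\mathcal{D})$. (d) For each $k\in\{1,2\}$, let $\begin{pmatrix}\phi_k\\ \psi_k\end{pmatrix}\in\mathcal{P}_{q,[\alpha,\infty)}$ be such that $\det(\Theta_{21}\phi_k+\Theta_{22}\psi_k)$ does not vanish identically. Then $\langle\begin{pmatrix}\phi_1\\ \psi_1\end{pmatrix}\rangle=\langle\begin{pmatrix}\phi_2\\ \psi_2\end{pmatrix}\rangle$ if and only if $(\Theta_{11}\phi_1+\Theta_{12}\psi_1)(\Theta_{21}\phi_1+\Theta_{22}\psi_1)^{-1}=(\Theta_{11}\phi_2+\Theta_{12}\psi_2)(\Theta_{21}\phi_2+\Theta_{22}\psi_2)^{-1}$.
   Context: $J_q:=\begin{bmatrix}0_{q\times q}&-iI_q\\ iI_q&0_{q\times q}\end{bmatrix}$, $I_q$ the $q\times q$ identity, $A^{-*}:=(A^{-1})^*$, and $A\succeq0$ means $A$ nonnegative Hermitian; $A\preceq B$ means $B-A\succeq0$. $\mathcal{P}_{J_q,[\alpha,\infty)}$ is the set of all $2q\times2q$ matrix-valued functions $\Theta$ meromorphic in $\mathbb{C}\setminus[\alpha,\infty)$ for which there is a discrete subset $\mathcal{D}$ of $\mathbb{C}\setminus[\alpha,\infty)$ such that $\Theta$ is holomorphic in $\mathbb{C}\setminus([\alpha,\infty)\cup\mathcal{D})$, $\Theta(z)J_q\Theta^*(z)\preceq J_q$ for $z$ in the open upper half-plane minus $\mathcal{D}$, and $\Theta(x)J_q\Theta^*(x)=J_q$ for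 $x\in(-\infty,\alpha)\setminus\mathcal{D}$. With $P_\alpha(z):=\operatorname{diag}((z-\alpha)I_q,I_q)$, $\mathcal{P}'_{J_q,[\alpha,\infty)}$ is the set of all $\Theta\in\mathcal{P}_{J_q,[\alpha,\infty)}$ with $P_\alpha\Theta P_\alpha^{-1}\in\mathcal{P}_{J_q,[\alpha,\infty)}$. $\mathcal{P}_{q,[\alpha,\infty)}$ (the $q\times q$ Stieltjes pairs) is the set of pairs $\begin{pmatrix}\phi\\ \psi\end{pmatrix}$ of $q\times q$ matrix-valued functions meromorphic in $\mathbb{C}\setminus[\alpha,\infty)$ for which there is a discrete $\mathcal{D}\subseteq\mathbb{C}\setminus[\alpha,\infty)$ with: $\phi,\psi$ holomorphic in $\mathbb{C}\setminus([\alpha,\infty)\cup\mathcal{D})$; $\operatorname{rank}\begin{pmatrix}\phi(z)\\ \psi(z)\end{pmatrix}=q$ there; and $\begin{pmatrix}\phi(z)\\ \psi(z)\end{pmatrix}^*\frac{-J_q}{2\operatorname{Im}z}\begin{pmatrix}\phi(z)\\ \psi(z)\end{pmatrix}\succeq0$ and $\begin{pmatrix}(z-\alpha)\phi(z)\\ \psi(z)\end{pmatrix}^*\frac{-J_q}{2\operatorname{Im}z}\begin{pmatrix}(z-\alpha)\phi(z)\\ \psi(z)\end{pmatrix}\succeq0$ for $z\in\mathbb{C}\setminus(\mathbb{R}\cup\mathcal{D})$. Two such pairs are equivalent if there are a $q\times q$ matrix-valued $g$ meromorphic in $\mathbb{C}\setminus[\alpha,\infty)$ and a discrete $\mathcal{D}$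 such that all functions are holomorphic in $\mathbb{C}\setminus([\alpha,\infty)\cup\mathcal{D})$, $\det g(z)\ne0$ and $\phi_2=\phi_1g$, $\psi_2=\psi_1g$ there; $\langle\cdot\rangle$ denotes the equivalence class. *)

theory Defs
  imports "HOL-Analysis.Analysis" "HOL-Complex_Analysis.Complex_Analysis"
begin

definition dom_alpha :: "real \<Rightarrow> complex set" where
  "dom_alpha \<alpha> = - (complex_of_real ` {\<alpha>..})"

definition discrete_in :: "complex set \<Rightarrow> complex set \<Rightarrow> bool" where
  "discrete_in D G \<longleftrightarrow> D \<subseteq> G \<and> D sparse_in G"

definition mholo :: "(complex \<Rightarrow> complex^'n^'m) \<Rightarrow> complex set \<Rightarrow> bool" where
  "mholo F S \<longleftrightarrow> (\<forall>i j. (\<lambda>z. F z $ i $ j) holomorphic_on S)"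

definition mmero :: "(complex \<Rightarrow> complex^'n^'m) \<Rightarrow> complex set \<Rightarrow> bool" where
  "mmero F S \<longleftrightarrow> (\<forall>i j. (\<lambda>z. F z $ i $ j) meromorphic_on S)"

definition madj :: "complex^'n^'m \<Rightarrow> complex^'m^'n" where
  "madj A = (\<chi> i j. cnj (A $ j $ i))"

definition smat :: "complex \<Rightarrow> complex^'n^'m \<Rightarrow> complex^'n^'m" where
  "smat c A = (\<chi> i j. c * A $ i $ j)"

definition psd :: "complex^'n^'n \<Rightarrow> bool" where
  "psd A \<longleftrightarrow> (\<forall>i j. A $ i $ j = cnj (A $ j $ i)) \<and>
     (\<forall>v. 0 \<le> Re (\<Sum>i\<in>UNIV. \<Sum>j\<in>UNIV. cnj (v $ i) * A $ i $ j * v $ j))"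

text \<open>2q x 2q matrices are indexed by 'q + 'q (Inl = first block, Inr = second block).\<close>
definition Jmat :: "complex^('q::finite+'q)^('q::finite+'q)" where
  "Jmat = (\<chi> i j. case (i, j) of
      (Inl a, Inr b) \<Rightarrow> (if a = b then - \<i> else 0)
    | (Inr a, Inl b) \<Rightarrow> (if a = b then \<i> else 0)
    | _ \<Rightarrow> 0)"

definition Palpha :: "real \<Rightarrow> complex \<Rightarrow> complex^('q::finite+'q)^('q::finite+'q)" where
  "Palpha \<alpha> z = (\<chi> i j. if i = j then (case i of Inl _ \<Rightarrow> z - complex_of_real \<alpha> | Inr _ \<Rightarrow> 1) else 0)"

definition stack :: "complex^'n^'q \<Rightarrow> complex^'n^'q \<Rightarrow> complex^'n^('q::finite+'q)" where
  "stack a b = (\<chi> i j. case i of Inl k \<Rightarrow> a $ k $ j | Inr k \<Rightarrow> b $ k $ j)"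

definition b11 :: "complex^('q::finite+'q)^('q::finite+'q) \<Rightarrow> complex^'q^'q" where
  "b11 A = (\<chi> i j. A $ Inl i $ Inl j)"
definition b12 :: "complex^('q::finite+'q)^('q::finite+'q) \<Rightarrow> complex^'q^'q" where
  "b12 A = (\<chi> i j. A $ Inl i $ Inr j)"
definition b21 :: "complex^('q::finite+'q)^('q::finite+'q) \<Rightarrow> complex^'q^'q" where
  "b21 A = (\<chi> i j. A $ Inr i $ Inl j)"
definition b22 :: "complex^('q::finite+'q)^('q::finite+'q) \<Rightarrow> complex^'q^'q" where
  "b22 A = (\<chi> i j. A $ Inr i $ Inr j)"

definition PJ :: "real \<Rightarrow> (complex \<Rightarrow> complex^('q::finite+'q)^('q::finite+'q)) \<Rightarrow> bool" where
  "PJ \<alpha> \<Theta> \<longleftrightarrow> mmero \<Theta> (dom_alpha \<alpha>) \<and>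
     (\<exists>D. discrete_in D (dom_alpha \<alpha>) \<and> mholo \<Theta> (dom_alpha \<alpha> - D) \<and>
       (\<forall>z. Im z > 0 \<and> z \<notin> D \<longrightarrow> psd (Jmat - \<Theta> z ** Jmat ** madj (\<Theta> z))) \<and>
       (\<forall>x. x < \<alpha> \<and> complex_of_real x \<notin> D \<longrightarrow>
            \<Theta> (complex_of_real x) ** Jmat ** madj (\<Theta> (complex_of_real x)) = Jmat))"

definition PJ' :: "real \<Rightarrow> (complex \<Rightarrow> complex^('q::finite+'q)^('q::finite+'q)) \<Rightarrow> bool" where
  "PJ' \<alpha> \<Theta> \<longleftrightarrow> PJ \<alpha> \<Theta> \<and> PJ \<alpha> (\<lambda>z. Palpha \<alpha> z ** \<Theta> z ** matrix_inv (Palpha \<alpha> z))"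

definition stieltjes_pair :: "real \<Rightarrow> (complex \<Rightarrow> complex^'q::finite^'q) \<Rightarrow> (complex \<Rightarrow> complex^'q::finite^'q) \<Rightarrow> bool" where
  "stieltjes_pair \<alpha> \<phi> \<psi> \<longleftrightarrow> mmero \<phi> (dom_alpha \<alpha>) \<and> mmero \<psi> (dom_alpha \<alpha>) \<and>
     (\<exists>D. discrete_in D (dom_alpha \<alpha>) \<and> mholo \<phi> (dom_alpha \<alpha> - D) \<and> mholo \<psi> (dom_alpha \<alpha> - D) \<and>
       (\<forall>z\<in>dom_alpha \<alpha> - D. rank (stack (\<phi> z) (\<psi> z)) = CARD('q)) \<and>
       (\<forall>z. z \<notin> \<real> \<and> z \<notin> D \<longrightarrow>
          psd (madj (stack (\<phi> z) (\<psi> z)) ** smat (1 / (2 * complex_of_real (Im z))) (- Jmat)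
               ** stack (\<phi> z) (\<psi> z)) \<and>
          psd (madj (stack (smat (z - complex_of_real \<alpha>) (\<phi> z)) (\<psi> z))
               ** smat (1 / (2 * complex_of_real (Im z))) (- Jmat)
               ** stack (smat (z - complex_of_real \<alpha>) (\<phi> z)) (\<psi> z))))"

definition pair_equiv :: "real \<Rightarrow> (complex \<Rightarrow> complex^'q::finite^'q) \<Rightarrow> (complex \<Rightarrow> complex^'q::finite^'q)
    \<Rightarrow> (complex \<Rightarrow> complex^'q::finite^'q) \<Rightarrow> (complex \<Rightarrow> complex^'q::finite^'q) \<Rightarrow> bool" where
  "pair_equiv \<alpha> \<phi>1 \<psi>1 \<phi>2 \<psi>2 \<longleftrightarrow>
     (\<exists>(g :: complex \<Rightarrow> complex^'q^'q) D. mmero g (dom_alpha \<alpha>) \<and> discrete_in D (dom_alpha \<alpha>) \<and>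
        mholo \<phi>1 (dom_alpha \<alpha> - D) \<and> mholo \<psi>1 (dom_alpha \<alpha> - D) \<and>
        mholo \<phi>2 (dom_alpha \<alpha> - D) \<and> mholo \<psi>2 (dom_alpha \<alpha> - D) \<and> mholo g (dom_alpha \<alpha> - D) \<and>
        (\<forall>z\<in>dom_alpha \<alpha> - D. det (g z) \<noteq> 0 \<and> \<phi>2 z = \<phi>1 z ** g z \<and> \<psi>2 z = \<psi>1 z ** g z))"

definition stieltjes_class :: "real \<Rightarrow> (complex \<Rightarrow> complex^'q::finite^'q) \<Rightarrow> (complex \<Rightarrow> complex^'q::finite^'q)
    \<Rightarrow> ((complex \<Rightarrow> complex^'q::finite^'q) \<times> (complex \<Rightarrow> complex^'q::finite^'q)) set" where
  "stieltjes_class \<alpha> \<phi> \<psi> = {p. stieltjes_pair \<alpha> (fst p) (snd p) \<and> pair_equiv \<alpha> \<phi> \<psi> (fst p) (snd p)}"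

definition vanishes_identically :: "complex set \<Rightarrow> (complex \<Rightarrow> complex) \<Rightarrow> bool" where
  "vanishes_identically G h \<longleftrightarrow> (\<exists>D. discrete_in D G \<and> (\<forall>z\<in>G - D. h z = 0))"

definition mero_eq :: "complex set \<Rightarrow> (complex \<Rightarrow> 'b) \<Rightarrow> (complex \<Rightarrow> 'b) \<Rightarrow> bool" where
  "mero_eq G F1 F2 \<longleftrightarrow> (\<exists>D. discrete_in D G \<and> (\<forall>z\<in>G - D. F1 z = F2 z))"

definition lft_num :: "(complex \<Rightarrow> complex^('q::finite+'q)^('q::finite+'q)) \<Rightarrow> (complex \<Rightarrow> complex^'q::finite^'q)
    \<Rightarrow> (complex \<Rightarrow> complex^'q::finite^'q) \<Rightarrow> complex \<Rightarrow> complex^'q^'q" where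
  "lft_num \<Theta> \<phi> \<psi> z = b11 (\<Theta> z) ** \<phi> z + b12 (\<Theta> z) ** \<psi> z"

definition lft_den :: "(complex \<Rightarrow> complex^('q::finite+'q)^('q::finite+'q)) \<Rightarrow> (complex \<Rightarrow> complex^'q::finite^'q)
    \<Rightarrow> (complex \<Rightarrow> complex^'q::finite^'q) \<Rightarrow> complex \<Rightarrow> complex^'q^'q" where
  "lft_den \<Theta> \<phi> \<psi> z = b21 (\<Theta> z) ** \<phi> z + b22 (\<Theta> z) ** \<psi> z"

definition lft :: "(complex \<Rightarrow> complex^('q::finite+'q)^('q::finite+'q)) \<Rightarrow> (complex \<Rightarrow> complex^'q::finite^'q)
    \<Rightarrow> (complex \<Rightarrow> complex^'q::finite^'q) \<Rightarrow> complex \<Rightarrow> complex^'q^'q" where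
  "lft \<Theta> \<phi> \<psi> z = lft_num \<Theta> \<phi> \<psi> z ** matrix_inv (lft_den \<Theta> \<phi> \<psi> z)"

definition ineq1 :: "(complex \<Rightarrow> complex^('q::finite+'q)^('q::finite+'q)) \<Rightarrow> (complex \<Rightarrow> complex^'q::finite^'q) \<Rightarrow> complex \<Rightarrow> bool" where
  "ineq1 \<Theta> f z \<longleftrightarrow>
     psd (madj (stack (f z) (mat 1)) ** madj (matrix_inv (\<Theta> z))
          ** smat (1 / (2 * complex_of_real (Im z))) (- Jmat)
          ** matrix_inv (\<Theta> z) ** stack (f z) (mat 1))"

definition ineq2 :: "real \<Rightarrow> (complex \<Rightarrow> complex^('q::finite+'q)^('q::finite+'q)) \<Rightarrow> (complex \<Rightarrow> complex^'q::finite^'q) \<Rightarrow> complex \<Rightarrow> bool" where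
  "ineq2 \<alpha> \<Theta> f z \<longleftrightarrow>
     psd (madj (stack (f z) (mat 1)) ** madj (matrix_inv (\<Theta> z)) ** madj (Palpha \<alpha> z)
          ** smat (1 / (2 * complex_of_real (Im z))) (- Jmat)
          ** Palpha \<alpha> z ** matrix_inv (\<Theta> z) ** stack (f z) (mat 1))"

end

theory Submission
  imports Defs
begin

text \<open>Off a discrete subset of the slit plane all functions involved are holomorphic and all
relevant determinants are nonzero, so each claim reduces to a pointwise matrix identity plus
bookkeeping of exceptional sets. The key identity: if \<open>E = \<Theta>\<^sub>2\<^sub>1 \<phi> + \<Theta>\<^sub>2\<^sub>2 \<psi>\<close> is invertible and
\<open>f = (\<Theta>\<^sub>1\<^sub>1 \<phi> + \<Theta>\<^sub>1\<^sub>2 \<psi>) E\<^sup>-\<^sup>1\<close>, then \<open>\<Theta>\<^sup>-\<^sup>1 (f; I) = (\<phi>; \<psi>) E\<^sup>-\<^sup>1\<close>. Hence the two inequalities for \<open>f\<close>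
are congruence transforms of the defining inequalities of the Stieltjes pair \<open>(\<phi>; \<psi>)\<close>;
conversely \<open>(\<phi>; \<psi>) := \<Theta>\<^sup>-\<^sup>1 (f; I)\<close> is a Stieltjes pair with \<open>E = I\<close>, and two pairs producing
the same \<open>f\<close> differ by the invertible right factor \<open>E\<^sub>1\<^sup>-\<^sup>1 E\<^sub>2\<close>. Finally, \<open>det \<Theta>\<close> cannot vanish
identically: \<open>\<Theta>\<close> is J-unitary, hence invertible, on the real half-line left of \<open>\<alpha>\<close>, which is
uncountable and so not covered by a discrete set; since the slit plane is connected, a meromorphic
determinant that does not vanish identically is nonzero off a discrete set.\<close>

section \<open>The slit plane and discrete exceptional sets\<close>

lemma dom_alpha_iff: "z \<in> dom_alpha a \<longleftrightarrow> Im z \<noteq> 0 \<or> Re z < a"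
  by (auto simp: dom_alpha_def complex_eq_iff image_iff intro!: bexI[of _ "Re z"])

lemma open_dom_alpha: "open (dom_alpha a)"
  by (simp add: dom_alpha_def closed_slot_right open_Compl)

lemma connected_dom_alpha: "connected (dom_alpha a)"
  by (simp add: dom_alpha_def starlike_imp_connected starlike_slotted_complex_plane_right)

lemma nonreal_in_dom_alpha: "z \<notin> \<real> \<Longrightarrow> z \<in> dom_alpha a"
  by (simp add: dom_alpha_iff complex_is_Real_iff)

lemma discrete_in_Un: "discrete_in D1 U \<Longrightarrow> discrete_in D2 U \<Longrightarrow> discrete_in (D1 \<union> D2) U"
  by (auto simp: discrete_in_def intro: sparse_in_union')

lemma discrete_in_exceptions: "eventually P (cosparse U) \<Longrightarrow> discrete_in {z\<in>U. \<not> P z} U"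
  unfolding discrete_in_def eventually_cosparse by (auto elim: sparse_in_subset2)

lemma eventually_cosparse_if_discrete_in:
  assumes "open U" "discrete_in D U" "\<forall>z\<in>U - D. P z"
  shows "eventually P (cosparse U)"
proof -
  have "eventually (\<lambda>z. z \<notin> D \<and> z \<in> U) (cosparse U)"
    using assms by (intro eventually_conj eventually_not_in_cosparse eventually_in_cosparse)
      (auto simp: discrete_in_def)
  thus ?thesis by eventually_elim (use assms(3) in auto)
qed

lemma vanishes_identically_iff:
  "open U \<Longrightarrow> vanishes_identically U h \<longleftrightarrow> eventually (\<lambda>z. h z = 0) (cosparse U)"
  unfolding vanishes_identically_def
  by (blast intro: eventually_cosparse_if_discrete_in dest: discrete_in_exceptions)

lemma mero_eq_iff:
  "open U \<Longrightarrow> mero_eq U F G \<longleftrightarrow> eventually (\<lambda>z. F z = G z) (cosparse U)"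
  unfolding mero_eq_def
  by (blast intro: eventually_cosparse_if_discrete_in dest: discrete_in_exceptions)

lemma meromorphic_not_vanishing_imp_eventually_nonzero:
  assumes "h meromorphic_on U" "open U" "connected U" "\<not> vanishes_identically U h"
  shows "eventually (\<lambda>z. h z \<noteq> 0) (cosparse U)"
  using meromorphic_imp_constant_or_avoid[OF assms(1-3), of 0] assms(4)
    vanishes_identically_iff[OF assms(2)] by auto

lemma discrete_in_dom_alpha_misses_real_point:
  assumes "discrete_in D (dom_alpha \<alpha>)"
  obtains x where "x < \<alpha>" "complex_of_real x \<notin> D"
proof -
  have "countable D"
    using sparse_imp_countable[OF open_dom_alpha] assms Int_absorb1
    by (metis discrete_in_def)
  moreover have "\<not> countable (complex_of_real ` {\<alpha> - 1<..<\<alpha>})"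
    using uncountable_open_interval[of "\<alpha> - 1" \<alpha>]
    by (auto dest: countable_image_inj_on[OF _ inj_on_subset[OF inj_of_real]])
  ultimately have "\<not> complex_of_real ` {\<alpha> - 1<..<\<alpha>} \<subseteq> D"
    using countable_subset by metis
  then obtain x where "x \<in> {\<alpha> - 1<..<\<alpha>}" "complex_of_real x \<notin> D"
    by blast
  thus ?thesis by (intro that) simp_all
qed

section \<open>Nonnegative Hermitian forms\<close>

lemma madj_nth [simp]: "madj A $ i $ j = cnj (A $ j $ i)"
  by (simp add: madj_def)

lemma madj_madj [simp]: "madj (madj A) = A"
  by (simp add: vec_eq_iff)

lemma madj_mult: "madj (A ** B) = madj B ** madj A"
  by (simp add: vec_eq_iff matrix_matrix_mult_def cnj_sum mult.commute)

definition cdot :: "complex^'n \<Rightarrow> complex^'n \<Rightarrow> complex" where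
  "cdot v w = (\<Sum>i\<in>UNIV. cnj (v $ i) * w $ i)"

lemma cdot_madj: "cdot v (madj g *v w) = cdot (g *v v) w"
proof -
  have "cdot v (madj g *v w) = (\<Sum>i\<in>UNIV. \<Sum>k\<in>UNIV. cnj (v $ i) * cnj (g $ k $ i) * w $ k)"
    by (simp add: cdot_def matrix_vector_mult_def sum_distrib_left mult.assoc)
  also have "\<dots> = (\<Sum>k\<in>UNIV. \<Sum>i\<in>UNIV. cnj (v $ i) * cnj (g $ k $ i) * w $ k)"
    by (rule sum.swap)
  also have "\<dots> = cdot (g *v v) w"
    by (simp add: cdot_def matrix_vector_mult_def cnj_sum sum_distrib_left mult_ac)
  finally show ?thesis .
qed

lemma psd_iff: "psd A \<longleftrightarrow> madj A = A \<and> (\<forall>v. 0 \<le> Re (cdot v (A *v v)))"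
proof -
  have "(\<forall>i j. A $ i $ j = cnj (A $ j $ i)) \<longleftrightarrow> madj A = A"
    unfolding vec_eq_iff madj_nth by metis
  moreover have "(\<Sum>i\<in>UNIV. \<Sum>j\<in>UNIV. cnj (v $ i) * A $ i $ j * v $ j) = cdot v (A *v v)" for v
    by (simp add: cdot_def matrix_vector_mult_def sum_distrib_left mult.assoc)
  ultimately show ?thesis unfolding psd_def by simp
qed

lemma psd_congruence:
  assumes "psd A"
  shows "psd (madj g ** A ** g)"
  unfolding psd_iff
proof
  have "madj A = A"
    using assms psd_iff by blast
  thus "madj (madj g ** A ** g) = madj g ** A ** g"
    by (simp add: madj_mult matrix_mul_assoc)
  show "\<forall>v. 0 \<le> Re (cdot v ((madj g ** A ** g) *v v))"
  proof
    fix v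
    have "cdot v ((madj g ** A ** g) *v v) = cdot (g *v v) (A *v (g *v v))"
      by (simp add: matrix_vector_mul_assoc[symmetric] cdot_madj)
    thus "0 \<le> Re (cdot v ((madj g ** A ** g) *v v))"
      using assms unfolding psd_iff by metis
  qed
qed

section \<open>Block matrices\<close>

lemma sum_UNIV_Plus:
  fixes f :: "('a::finite + 'b::finite) \<Rightarrow> 'c::comm_monoid_add"
  shows "sum f UNIV = (\<Sum>i\<in>UNIV. f (Inl i)) + (\<Sum>i\<in>UNIV. f (Inr i))"
  using sum.Plus[of "UNIV :: 'a set" "UNIV :: 'b set" f] by (simp add: comp_def)

lemma matrix_add_rdistrib: "(A + B) ** C = A ** C + B ** C"
  by (simp add: vec_eq_iff matrix_matrix_mult_def ring_distribs sum.distrib)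

definition top_rows :: "complex^'n^('q::finite+'q) \<Rightarrow> complex^'n^'q" where
  "top_rows M = (\<chi> i j. M $ Inl i $ j)"

definition bottom_rows :: "complex^'n^('q::finite+'q) \<Rightarrow> complex^'n^'q" where
  "bottom_rows M = (\<chi> i j. M $ Inr i $ j)"

lemma stack_top_bottom_rows: "stack (top_rows M) (bottom_rows M) = M"
  by (simp add: stack_def top_rows_def bottom_rows_def vec_eq_iff split: sum.splits)

lemma stack_eq_iff: "stack a b = stack c d \<longleftrightarrow> a = c \<and> b = d"
proof
  assume "stack a b = stack c d"
  hence "top_rows (stack a b) = top_rows (stack c d)" "bottom_rows (stack a b) = bottom_rows (stack c d)"
    by simp_all
  thus "a = c \<and> b = d"
    by (simp add: top_rows_def bottom_rows_def stack_def vec_eq_iff)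
qed simp

lemma stack_mult: "stack a b ** c = stack (a ** c) (b ** c)"
  by (simp add: stack_def vec_eq_iff matrix_matrix_mult_def split: sum.splits)

lemma mult_stack_blocks:
  "T ** stack a b = stack (b11 T ** a + b12 T ** b) (b21 T ** a + b22 T ** b)"
  unfolding vec_eq_iff
proof (intro allI)
  fix i j
  show "(T ** stack a b) $ i $ j = stack (b11 T ** a + b12 T ** b) (b21 T ** a + b22 T ** b) $ i $ j"
    by (cases i) (simp_all add: stack_def matrix_matrix_mult_def sum_UNIV_Plus b11_def b12_def b21_def b22_def)
qed

lemma Palpha_nth:
  "Palpha \<alpha> z $ Inl a $ k = (if k = Inl a then z - complex_of_real \<alpha> else 0)"
  "Palpha \<alpha> z $ Inr b $ k = (if k = Inr b then 1 else 0)"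
  by (auto simp: Palpha_def)

lemma Palpha_mult_stack: "Palpha \<alpha> z ** stack a b = stack (smat (z - complex_of_real \<alpha>) a) b"
  unfolding vec_eq_iff
proof (intro allI)
  fix i j
  show "(Palpha \<alpha> z ** stack a b) $ i $ j = stack (smat (z - complex_of_real \<alpha>) a) b $ i $ j"
    by (cases i) (simp_all add: stack_def matrix_matrix_mult_def sum_UNIV_Plus Palpha_nth smat_def
        if_distrib[of "\<lambda>c. c * _"] sum.delta cong: if_cong)
qed

lemma Jmat_nth:
  "Jmat $ Inl a $ Inl b = 0" "Jmat $ Inr a $ Inr b = 0"
  "Jmat $ Inl a $ Inr b = (if a = b then - \<i> else 0)" "Jmat $ Inr a $ Inl b = (if a = b then \<i> else 0)"
  by (simp_all add: Jmat_def)

lemma Jmat_mult_Jmat: "(Jmat :: complex^('q::finite+'q)^('q+'q)) ** Jmat = mat 1"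
  unfolding vec_eq_iff
proof (intro allI)
  fix i j :: "'q + 'q"
  show "(Jmat ** Jmat) $ i $ j = mat 1 $ i $ j"
    by (cases i; cases j) (simp_all add: matrix_matrix_mult_def sum_UNIV_Plus Jmat_nth mat_def
        if_distrib[of "\<lambda>c. c * _"] sum.delta cong: if_cong)
qed

lemma row_mult_in_span:
  fixes T :: "'a::field^'p^'m" and M :: "'a^'n^'p"
  shows "row i (T ** M) \<in> vec.span (rows M)"
proof -
  have "row i (T ** M) = (\<Sum>k\<in>UNIV. T $ i $ k *s row k M)"
    by (simp add: vec_eq_iff row_def matrix_matrix_mult_def sum_component)
  also have "\<dots> \<in> vec.span (rows M)"
    by (intro vec.span_sum vec.span_scale vec.span_base) (auto simp: rows_def)
  finally show ?thesis .
qed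

lemma rank_full_if_basis_in_rows_mult:
  fixes T :: "'a::field^'p^'m" and M :: "'a^'n^'p"
  assumes "cart_basis \<subseteq> rows (T ** M)"
  shows "rank M = CARD('n)"
proof -
  have "rows (T ** M) \<subseteq> vec.span (rows M)"
    using row_mult_in_span[of _ T M] by (auto simp: rows_def)
  hence "vec.span (cart_basis :: ('a^'n) set) \<subseteq> vec.span (rows M)"
    using assms by (meson order_trans vec.span_minimal vec.subspace_span)
  hence "vec.span (rows M) = UNIV"
    by auto
  hence "vec.dim (rows M) = vec.dim (UNIV :: ('a^'n) set)"
    by (metis vec.dim_span)
  thus ?thesis
    by (simp add: row_rank_def_gen vec_dim_card card_cart_basis)
qed

lemma cart_basis_subset_rows_stack: "cart_basis \<subseteq> rows (stack F (mat 1 :: complex^'q::finite^'q))"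
proof
  fix v :: "complex^'q"
  assume "v \<in> cart_basis"
  then obtain j where v: "v = axis j 1"
    by (auto simp: cart_basis_def)
  have "row (Inr j) (stack F (mat 1)) = v"
    by (simp add: v vec_eq_iff row_def stack_def axis_def mat_def)
  thus "v \<in> rows (stack F (mat 1))"
    unfolding rows_def by blast
qed

section \<open>Matrix inverses\<close>

lemma matrix_inv_inverses:
  fixes A :: "'a::field^'n^'n"
  assumes "det A \<noteq> 0"
  shows "A ** matrix_inv A = mat 1" "matrix_inv A ** A = mat 1"
proof -
  have "\<exists>A'. A ** A' = mat 1 \<and> A' ** A = mat 1"
    using assms invertible_det_nz[of A] unfolding invertible_def by auto
  from someI_ex[OF this] show "A ** matrix_inv A = mat 1" "matrix_inv A ** A = mat 1"
    unfolding matrix_inv_def by auto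
qed

lemma matrix_inv_cancel_left:
  fixes A :: "'a::field^'n^'n"
  assumes "det A \<noteq> 0"
  shows "A ** (matrix_inv A ** B) = B" "matrix_inv A ** (A ** B) = B"
  using matrix_inv_inverses[OF assms] by (metis matrix_mul_assoc matrix_mul_lid)+

lemma det_nonzero_if_right_inverse:
  fixes A :: "'a::field^'n^'n"
  shows "A ** B = mat 1 \<Longrightarrow> det A \<noteq> 0"
  using det_mul[of A B] det_I by (metis mult_zero_left one_neq_zero)

lemma matrix_inv_eq_right_inverse:
  fixes A :: "'a::field^'n^'n"
  assumes "A ** B = mat 1"
  shows "matrix_inv A = B"
proof -
  have "matrix_inv A = matrix_inv A ** (A ** B)"
    using assms by simp
  also have "\<dots> = B"
    by (simp add: matrix_mul_assoc matrix_inv_inverses[OF det_nonzero_if_right_inverse[OF assms]])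
  finally show ?thesis .
qed

lemma matrix_inv_mat_1 [simp]: "matrix_inv (mat 1 :: 'a::field^'n^'n) = mat 1"
  by (rule matrix_inv_eq_right_inverse) simp

lemma det_matrix_inv_nonzero: "det (A :: 'a::field^'n^'n) \<noteq> 0 \<Longrightarrow> det (matrix_inv A) \<noteq> 0"
  using matrix_inv_inverses(2) det_nonzero_if_right_inverse by blast

lemma matrix_inv_mult:
  fixes A B :: "'a::field^'n^'n"
  assumes "det A \<noteq> 0" "det B \<noteq> 0"
  shows "matrix_inv (A ** B) = matrix_inv B ** matrix_inv A"
proof (rule matrix_inv_eq_right_inverse)
  have "A ** B ** (matrix_inv B ** matrix_inv A) = A ** (B ** matrix_inv B) ** matrix_inv A"
    by (simp add: matrix_mul_assoc)
  thus "A ** B ** (matrix_inv B ** matrix_inv A) = mat 1"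
    by (simp add: matrix_inv_inverses assms)
qed

definition cramer_minor :: "'a::field^'n^'n \<Rightarrow> 'n \<Rightarrow> 'n \<Rightarrow> 'a^'n^'n" where
  "cramer_minor A i j = (\<chi> r s. if s = i then (if r = j then 1 else 0) else A $ r $ s)"

lemma matrix_inv_cramer:
  fixes A :: "'a::field^'n^'n"
  assumes "det A \<noteq> 0"
  shows "matrix_inv A $ i $ j = det (cramer_minor A i j) / det A"
proof -
  define x where "x = (\<chi> k. matrix_inv A $ k $ j)"
  have "A *v x = (\<chi> r. if r = j then 1 else 0)"
    using matrix_inv_inverses(1)[OF assms]
    by (simp add: x_def vec_eq_iff matrix_vector_mult_def matrix_matrix_mult_def mat_def)
  hence "x = (\<chi> k. det (\<chi> r s. if s = k then (\<chi> r. if r = j then 1 else 0) $ r else A $ r $ s) / det A)"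
    using cramer[OF assms] by blast
  thus ?thesis
    by (simp add: x_def cramer_minor_def vec_eq_iff cong: if_cong)
qed

lemma det_nonzero_if_J_unitary:
  fixes T :: "complex^('q::finite+'q)^('q+'q)"
  assumes "T ** Jmat ** madj T = Jmat"
  shows "det T \<noteq> 0"
proof
  assume "det T = 0"
  hence "det (Jmat :: complex^('q+'q)^('q+'q)) = 0"
    using assms det_mul[of "T ** Jmat" "madj T"] det_mul[of T Jmat] by simp
  thus False
    using det_nonzero_if_right_inverse[OF Jmat_mult_Jmat] by blast
qed

lemma mholo_const: "mholo (\<lambda>z. C) S"
  by (simp add: mholo_def)

lemma mholo_subset: "mholo F S \<Longrightarrow> T \<subseteq> S \<Longrightarrow> mholo F T"
  unfolding mholo_def using holomorphic_on_subset by blast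

lemma mholo_add: "mholo F S \<Longrightarrow> mholo G S \<Longrightarrow> mholo (\<lambda>z. F z + G z) S"
  by (simp add: mholo_def holomorphic_on_add)

lemma mholo_mult: "mholo F S \<Longrightarrow> mholo G S \<Longrightarrow> mholo (\<lambda>z. F z ** G z) S"
  unfolding mholo_def matrix_matrix_mult_def by (auto intro!: holomorphic_intros)

lemma mholo_stack:
  assumes "mholo F S" "mholo G S"
  shows "mholo (\<lambda>z. stack (F z) (G z)) S"
  unfolding mholo_def
proof (intro allI)
  fix i j
  show "(\<lambda>z. stack (F z) (G z) $ i $ j) holomorphic_on S"
    using assms by (cases i) (simp_all add: mholo_def stack_def)
qed

lemma mholo_top_rows: "mholo F S \<Longrightarrow> mholo (\<lambda>z. top_rows (F z)) S"
  and mholo_bottom_rows: "mholo F S \<Longrightarrow> mholo (\<lambda>z. bottom_rows (F z)) S"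
  by (simp_all add: mholo_def top_rows_def bottom_rows_def)

lemma holomorphic_on_det: "mholo F S \<Longrightarrow> (\<lambda>z. det (F z)) holomorphic_on S"
  unfolding mholo_def det_def by (auto intro!: holomorphic_intros)

lemma mholo_matrix_inv:
  assumes "mholo F S" "\<forall>z\<in>S. det (F z) \<noteq> 0"
  shows "mholo (\<lambda>z. matrix_inv (F z)) S"
  unfolding mholo_def
proof (intro allI)
  fix i j
  have "mholo (\<lambda>z. cramer_minor (F z) i j) S"
    unfolding mholo_def
  proof (intro allI)
    fix r c
    show "(\<lambda>z. cramer_minor (F z) i j $ r $ c) holomorphic_on S"
      using assms(1) by (cases "c = i") (simp_all add: mholo_def cramer_minor_def)
  qed
  hence "(\<lambda>z. det (cramer_minor (F z) i j) / det (F z)) holomorphic_on S"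
    using assms by (intro holomorphic_on_divide holomorphic_on_det) auto
  thus "(\<lambda>z. matrix_inv (F z) $ i $ j) holomorphic_on S"
    by (rule holomorphic_transform) (use assms(2) in \<open>simp add: matrix_inv_cramer\<close>)
qed

lemma mholo_lft_num: "mholo \<Theta> S \<Longrightarrow> mholo \<phi> S \<Longrightarrow> mholo \<psi> S \<Longrightarrow> mholo (lft_num \<Theta> \<phi> \<psi>) S"
  and mholo_lft_den: "mholo \<Theta> S \<Longrightarrow> mholo \<phi> S \<Longrightarrow> mholo \<psi> S \<Longrightarrow> mholo (lft_den \<Theta> \<phi> \<psi>) S"
  unfolding lft_num_def[abs_def] lft_den_def[abs_def]
  by (intro mholo_add mholo_mult; simp add: mholo_def b11_def b12_def b21_def b22_def)+

lemma mmero_const: "mmero (\<lambda>z. C) S"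
  by (simp add: mmero_def meromorphic_on_const)

lemma mmero_add: "mmero F S \<Longrightarrow> mmero G S \<Longrightarrow> mmero (\<lambda>z. F z + G z) S"
  by (simp add: mmero_def meromorphic_on_add)

lemma mmero_mult: "mmero F S \<Longrightarrow> mmero G S \<Longrightarrow> mmero (\<lambda>z. F z ** G z) S"
  unfolding mmero_def matrix_matrix_mult_def by (auto intro!: meromorphic_on_sum meromorphic_on_mult)

lemma mmero_stack:
  assumes "mmero F S" "mmero G S"
  shows "mmero (\<lambda>z. stack (F z) (G z)) S"
  unfolding mmero_def
proof (intro allI)
  fix i j
  show "(\<lambda>z. stack (F z) (G z) $ i $ j) meromorphic_on S"
    using assms by (cases i) (simp_all add: mmero_def stack_def)
qed

lemma mmero_top_rows: "mmero F S \<Longrightarrow> mmero (\<lambda>z. top_rows (F z)) S"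
  and mmero_bottom_rows: "mmero F S \<Longrightarrow> mmero (\<lambda>z. bottom_rows (F z)) S"
  by (simp_all add: mmero_def top_rows_def bottom_rows_def)

lemma meromorphic_on_det: "mmero F S \<Longrightarrow> (\<lambda>z. det (F z)) meromorphic_on S"
  unfolding mmero_def det_def by (auto intro!: meromorphic_on_sum meromorphic_on_mult meromorphic_on_prod)

lemma mmero_matrix_inv:
  assumes "mmero F S" "eventually (\<lambda>z. det (F z) \<noteq> 0) (cosparse S)"
  shows "mmero (\<lambda>z. matrix_inv (F z)) S"
  unfolding mmero_def
proof (intro allI)
  fix i j
  have "mmero (\<lambda>z. cramer_minor (F z) i j) S"
    unfolding mmero_def
  proof (intro allI)
    fix r c
    show "(\<lambda>z. cramer_minor (F z) i j $ r $ c) meromorphic_on S"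
      using assms(1) by (cases "c = i") (simp_all add: mmero_def cramer_minor_def meromorphic_on_const)
  qed
  hence mero: "(\<lambda>z. det (cramer_minor (F z) i j) / det (F z)) meromorphic_on S"
    using assms(1) by (intro meromorphic_on_divide meromorphic_on_det)
  have ev: "eventually (\<lambda>z. det (cramer_minor (F z) i j) / det (F z) = matrix_inv (F z) $ i $ j) (cosparse S)"
    using assms(2) by eventually_elim (simp add: matrix_inv_cramer)
  show "(\<lambda>z. matrix_inv (F z) $ i $ j) meromorphic_on S"
    using meromorphic_on_cong'[OF ev refl] mero by simp
qed

lemma mmero_lft_den: "mmero \<Theta> S \<Longrightarrow> mmero \<phi> S \<Longrightarrow> mmero \<psi> S \<Longrightarrow> mmero (lft_den \<Theta> \<phi> \<psi>) S"
  unfolding lft_den_def[abs_def]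
  by (intro mmero_add mmero_mult; simp add: mmero_def b21_def b22_def)

definition jform :: "complex \<Rightarrow> complex^'n^('q::finite+'q) \<Rightarrow> complex^'n^'n" where
  "jform z X = madj X ** smat (1 / (2 * complex_of_real (Im z))) (- Jmat) ** X"

lemma psd_jform_mult_right: "psd (jform z X) \<Longrightarrow> psd (jform z (X ** g))"
  using psd_congruence[of "jform z X" g] by (simp add: jform_def madj_mult matrix_mul_assoc)

lemma ineq1_iff_jform: "ineq1 \<Theta> f z \<longleftrightarrow> psd (jform z (matrix_inv (\<Theta> z) ** stack (f z) (mat 1)))"
  by (simp add: ineq1_def jform_def madj_mult matrix_mul_assoc)

lemma ineq2_iff_jform:
  "ineq2 \<alpha> \<Theta> f z \<longleftrightarrow> psd (jform z (Palpha \<alpha> z ** matrix_inv (\<Theta> z) ** stack (f z) (mat 1)))"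
  by (simp add: ineq2_def jform_def madj_mult matrix_mul_assoc)

lemma stieltjes_pair_iff:
  "stieltjes_pair \<alpha> \<phi> \<psi> \<longleftrightarrow> mmero \<phi> (dom_alpha \<alpha>) \<and> mmero \<psi> (dom_alpha \<alpha>) \<and>
     (\<exists>D. discrete_in D (dom_alpha \<alpha>) \<and> mholo \<phi> (dom_alpha \<alpha> - D) \<and> mholo \<psi> (dom_alpha \<alpha> - D) \<and>
       (\<forall>z\<in>dom_alpha \<alpha> - D. rank (stack (\<phi> z) (\<psi> z)) = CARD('q)) \<and>
       (\<forall>z. z \<notin> \<real> \<and> z \<notin> D \<longrightarrow> psd (jform z (stack (\<phi> z) (\<psi> z))) \<and>
          psd (jform z (Palpha \<alpha> z ** stack (\<phi> z) (\<psi> z)))))"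
  for \<phi> \<psi> :: "complex \<Rightarrow> complex^'q::finite^'q"
  by (simp add: stieltjes_pair_def jform_def Palpha_mult_stack)

lemma stieltjes_pairE:
  assumes "stieltjes_pair \<alpha> \<phi> \<psi>"
  obtains D where "discrete_in D (dom_alpha \<alpha>)"
    "mholo \<phi> (dom_alpha \<alpha> - D)" "mholo \<psi> (dom_alpha \<alpha> - D)"
    "\<And>z. z \<notin> \<real> \<Longrightarrow> z \<notin> D \<Longrightarrow> psd (jform z (stack (\<phi> z) (\<psi> z)))"
    "\<And>z. z \<notin> \<real> \<Longrightarrow> z \<notin> D \<Longrightarrow> psd (jform z (Palpha \<alpha> z ** stack (\<phi> z) (\<psi> z)))"
  using assms unfolding stieltjes_pair_iff by metis

lemma PJ_meromorphic: "PJ \<alpha> \<Theta> \<Longrightarrow> mmero \<Theta> (dom_alpha \<alpha>)"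
  by (simp add: PJ_def)

lemma stieltjes_pair_meromorphic:
  "stieltjes_pair \<alpha> \<phi> \<psi> \<Longrightarrow> mmero \<phi> (dom_alpha \<alpha>) \<and> mmero \<psi> (dom_alpha \<alpha>)"
  by (simp add: stieltjes_pair_def)

lemma PJE:
  assumes "PJ \<alpha> \<Theta>"
  obtains D where "discrete_in D (dom_alpha \<alpha>)" "mholo \<Theta> (dom_alpha \<alpha> - D)"
    "\<And>x. x < \<alpha> \<Longrightarrow> complex_of_real x \<notin> D \<Longrightarrow>
       \<Theta> (complex_of_real x) ** Jmat ** madj (\<Theta> (complex_of_real x)) = Jmat"
  using assms unfolding PJ_def by metis

lemma PJ_det_not_vanishing:
  assumes "PJ \<alpha> \<Theta>"
  shows "\<not> vanishes_identically (dom_alpha \<alpha>) (\<lambda>z. det (\<Theta> z))"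
proof
  obtain D0 where D0: "discrete_in D0 (dom_alpha \<alpha>)"
    and J_unitary: "\<And>x. x < \<alpha> \<Longrightarrow> complex_of_real x \<notin> D0 \<Longrightarrow>
       \<Theta> (complex_of_real x) ** Jmat ** madj (\<Theta> (complex_of_real x)) = Jmat"
    using PJE[OF assms] by metis
  assume "vanishes_identically (dom_alpha \<alpha>) (\<lambda>z. det (\<Theta> z))"
  then obtain D1 where D1: "discrete_in D1 (dom_alpha \<alpha>)"
    and zero: "\<forall>z\<in>dom_alpha \<alpha> - D1. det (\<Theta> z) = 0"
    unfolding vanishes_identically_def by blast
  obtain x where "x < \<alpha>" "complex_of_real x \<notin> D0 \<union> D1"
    using discrete_in_dom_alpha_misses_real_point[OF discrete_in_Un[OF D0 D1]] .
  moreover from this have "complex_of_real x \<in> dom_alpha \<alpha>"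
    by (simp add: dom_alpha_iff)
  ultimately show False
    using zero det_nonzero_if_J_unitary[OF J_unitary] by blast
qed

lemma PJ_det_eventually_nonzero:
  "PJ \<alpha> \<Theta> \<Longrightarrow> eventually (\<lambda>z. det (\<Theta> z) \<noteq> 0) (cosparse (dom_alpha \<alpha>))"
  by (intro meromorphic_not_vanishing_imp_eventually_nonzero meromorphic_on_det PJ_meromorphic
      PJ_det_not_vanishing open_dom_alpha connected_dom_alpha)

lemma PJ_matrix_inv_meromorphic:
  "PJ \<alpha> \<Theta> \<Longrightarrow> mmero (\<lambda>z. matrix_inv (\<Theta> z)) (dom_alpha \<alpha>)"
  by (intro mmero_matrix_inv PJ_meromorphic PJ_det_eventually_nonzero)

lemma lft_den_det_eventually_nonzero:
  assumes "PJ \<alpha> \<Theta>" "stieltjes_pair \<alpha> \<phi> \<psi>"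
    and "\<not> vanishes_identically (dom_alpha \<alpha>) (\<lambda>z. det (lft_den \<Theta> \<phi> \<psi> z))"
  shows "eventually (\<lambda>z. det (lft_den \<Theta> \<phi> \<psi> z) \<noteq> 0) (cosparse (dom_alpha \<alpha>))"
  using assms stieltjes_pair_meromorphic[OF assms(2)]
  by (intro meromorphic_not_vanishing_imp_eventually_nonzero meromorphic_on_det mmero_lft_den
      PJ_meromorphic open_dom_alpha connected_dom_alpha) auto

section \<open>Linear fractional transformations\<close>

lemma stieltjes_pair_of_inequalities:
  fixes \<Theta> :: "complex \<Rightarrow> complex^('q::finite + 'q)^('q + 'q)" and f :: "complex \<Rightarrow> complex^'q^'q"
  assumes PJ: "PJ \<alpha> \<Theta>" and mero_f: "mmero f (dom_alpha \<alpha>)" and D: "discrete_in D (dom_alpha \<alpha>)"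
    and holo_f: "mholo f (dom_alpha \<alpha> - D)" and holo_\<Theta>: "mholo \<Theta> (dom_alpha \<alpha> - D)"
    and det_\<Theta>: "\<forall>z\<in>dom_alpha \<alpha> - D. det (\<Theta> z) \<noteq> 0"
    and ineqs: "\<forall>z. z \<notin> \<real> \<and> z \<notin> D \<longrightarrow> ineq1 \<Theta> f z \<and> ineq2 \<alpha> \<Theta> f z"
  shows "\<exists>\<phi> \<psi>. stieltjes_pair \<alpha> \<phi> \<psi> \<and> mholo \<phi> (dom_alpha \<alpha> - D) \<and> mholo \<psi> (dom_alpha \<alpha> - D) \<and>
           (\<forall>z\<in>dom_alpha \<alpha> - D. det (lft_den \<Theta> \<phi> \<psi> z) \<noteq> 0 \<and>
              f z = lft_num \<Theta> \<phi> \<psi> z ** matrix_inv (lft_den \<Theta> \<phi> \<psi> z))"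
proof -
  define S where "S z = matrix_inv (\<Theta> z) ** stack (f z) (mat 1)" for z
  define \<phi> where "\<phi> z = top_rows (S z)" for z
  define \<psi> where "\<psi> z = bottom_rows (S z)" for z
  have S_eq: "stack (\<phi> z) (\<psi> z) = S z" for z
    by (simp add: \<phi>_def \<psi>_def stack_top_bottom_rows)
  have "mholo S (dom_alpha \<alpha> - D)"
    unfolding S_def[abs_def]
    by (intro mholo_mult mholo_matrix_inv mholo_stack mholo_const holo_\<Theta> holo_f det_\<Theta>)
  hence holo: "mholo \<phi> (dom_alpha \<alpha> - D)" "mholo \<psi> (dom_alpha \<alpha> - D)"
    unfolding \<phi>_def[abs_def] \<psi>_def[abs_def] by (auto intro: mholo_top_rows mholo_bottom_rows)
  have "mmero S (dom_alpha \<alpha>)"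
    unfolding S_def[abs_def]
    by (intro mmero_mult mmero_stack mmero_const PJ_matrix_inv_meromorphic PJ mero_f)
  hence mero: "mmero \<phi> (dom_alpha \<alpha>)" "mmero \<psi> (dom_alpha \<alpha>)"
    unfolding \<phi>_def[abs_def] \<psi>_def[abs_def] by (auto intro: mmero_top_rows mmero_bottom_rows)
  have \<Theta>_S: "\<Theta> z ** S z = stack (f z) (mat 1)" if "z \<in> dom_alpha \<alpha> - D" for z
    using det_\<Theta> that by (simp add: S_def matrix_inv_cancel_left)
  have lft_parts: "lft_num \<Theta> \<phi> \<psi> z = f z \<and> lft_den \<Theta> \<phi> \<psi> z = mat 1" if "z \<in> dom_alpha \<alpha> - D" for z
    using \<Theta>_S[OF that] mult_stack_blocks[of "\<Theta> z" "\<phi> z" "\<psi> z"]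
    by (simp add: S_eq lft_num_def lft_den_def stack_eq_iff)
  have "stieltjes_pair \<alpha> \<phi> \<psi>"
    unfolding stieltjes_pair_iff
  proof (intro conjI exI[of _ D] mero holo D ballI allI impI)
    fix z
    assume "z \<in> dom_alpha \<alpha> - D"
    thus "rank (stack (\<phi> z) (\<psi> z)) = CARD('q)"
      unfolding S_eq
      by (intro rank_full_if_basis_in_rows_mult[of "\<Theta> z"]) (simp add: \<Theta>_S cart_basis_subset_rows_stack)
  next
    fix z :: complex
    assume "z \<notin> \<real> \<and> z \<notin> D"
    thus "psd (jform z (stack (\<phi> z) (\<psi> z)))" "psd (jform z (Palpha \<alpha> z ** stack (\<phi> z) (\<psi> z)))"
      using ineqs by (simp_all add: S_eq S_def ineq1_iff_jform ineq2_iff_jform matrix_mul_assoc)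
  qed
  thus ?thesis
    using holo lft_parts by - (rule exI[of _ \<phi>], rule exI[of _ \<psi>], simp)
qed

lemma matrix_inv_stack_lft:
  assumes "det (\<Theta> z) \<noteq> 0" "det (lft_den \<Theta> \<phi> \<psi> z) \<noteq> 0"
  shows "matrix_inv (\<Theta> z) ** stack (lft \<Theta> \<phi> \<psi> z) (mat 1) = stack (\<phi> z) (\<psi> z) ** matrix_inv (lft_den \<Theta> \<phi> \<psi> z)"
proof -
  let ?E = "lft_den \<Theta> \<phi> \<psi> z"
  have "stack (lft \<Theta> \<phi> \<psi> z) (mat 1) = stack (lft_num \<Theta> \<phi> \<psi> z ** matrix_inv ?E) (?E ** matrix_inv ?E)"
    by (simp add: lft_def matrix_inv_inverses(1)[OF assms(2)])
  also have "\<dots> = \<Theta> z ** (stack (\<phi> z) (\<psi> z) ** matrix_inv ?E)"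
    by (simp add: stack_mult mult_stack_blocks lft_num_def lft_den_def matrix_add_rdistrib matrix_mul_assoc)
  finally show ?thesis
    by (simp add: matrix_inv_cancel_left(2)[OF assms(1)])
qed

lemma lft_inequalities:
  assumes "det (\<Theta> z) \<noteq> 0" "det (lft_den \<Theta> \<phi> \<psi> z) \<noteq> 0"
    and "psd (jform z (stack (\<phi> z) (\<psi> z)))" "psd (jform z (Palpha \<alpha> z ** stack (\<phi> z) (\<psi> z)))"
  shows "ineq1 \<Theta> (lft \<Theta> \<phi> \<psi>) z \<and> ineq2 \<alpha> \<Theta> (lft \<Theta> \<phi> \<psi>) z"
proof -
  let ?g = "matrix_inv (lft_den \<Theta> \<phi> \<psi> z)"
  have eq: "matrix_inv (\<Theta> z) ** stack (lft \<Theta> \<phi> \<psi> z) (mat 1) = stack (\<phi> z) (\<psi> z) ** ?g"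
    by (rule matrix_inv_stack_lft[OF assms(1,2)])
  hence eq_Palpha: "Palpha \<alpha> z ** matrix_inv (\<Theta> z) ** stack (lft \<Theta> \<phi> \<psi> z) (mat 1) = Palpha \<alpha> z ** stack (\<phi> z) (\<psi> z) ** ?g"
    by (simp add: matrix_mul_assoc[symmetric])
  show ?thesis
    unfolding ineq1_iff_jform ineq2_iff_jform eq eq_Palpha by (intro conjI psd_jform_mult_right assms(3,4))
qed

lemma lft_of_stieltjes_pair:
  fixes \<Theta> :: "complex \<Rightarrow> complex^('q::finite + 'q)^('q + 'q)"
  assumes PJ: "PJ \<alpha> \<Theta>" and pair: "stieltjes_pair \<alpha> \<phi> \<psi>"
    and not_vanishing: "\<not> vanishes_identically (dom_alpha \<alpha>) (\<lambda>z. det (lft_den \<Theta> \<phi> \<psi> z))"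
  shows "\<exists>D. discrete_in D (dom_alpha \<alpha>) \<and>
     mholo \<Theta> (dom_alpha \<alpha> - D) \<and> mholo \<phi> (dom_alpha \<alpha> - D) \<and> mholo \<psi> (dom_alpha \<alpha> - D) \<and>
     (\<forall>z\<in>dom_alpha \<alpha> - D. det (\<Theta> z) \<noteq> 0 \<and> det (lft_den \<Theta> \<phi> \<psi> z) \<noteq> 0) \<and>
     mholo (lft \<Theta> \<phi> \<psi>) (dom_alpha \<alpha> - D) \<and>
     (\<forall>z. z \<notin> \<real> \<and> z \<notin> D \<longrightarrow> ineq1 \<Theta> (lft \<Theta> \<phi> \<psi>) z \<and> ineq2 \<alpha> \<Theta> (lft \<Theta> \<phi> \<psi>) z) \<and>
     (\<forall>z\<in>dom_alpha \<alpha> - D. lft \<Theta> \<phi> \<psi> z = lft_num \<Theta> \<phi> \<psi> z ** matrix_inv (lft_den \<Theta> \<phi> \<psi> z))"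
proof -
  let ?U = "dom_alpha \<alpha>"
  obtain Dp where Dp: "discrete_in Dp ?U" and holo_pair: "mholo \<phi> (?U - Dp)" "mholo \<psi> (?U - Dp)"
    and psd_pair: "\<And>z. z \<notin> \<real> \<Longrightarrow> z \<notin> Dp \<Longrightarrow> psd (jform z (stack (\<phi> z) (\<psi> z)))"
      "\<And>z. z \<notin> \<real> \<Longrightarrow> z \<notin> Dp \<Longrightarrow> psd (jform z (Palpha \<alpha> z ** stack (\<phi> z) (\<psi> z)))"
    using stieltjes_pairE[OF pair] by metis
  obtain D\<Theta> where D\<Theta>: "discrete_in D\<Theta> ?U" and holo_\<Theta>: "mholo \<Theta> (?U - D\<Theta>)"
    using PJE[OF PJ] by metis
  define Ddet where "Ddet = {z\<in>?U. \<not> (det (\<Theta> z) \<noteq> 0 \<and> det (lft_den \<Theta> \<phi> \<psi> z) \<noteq> 0)}"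
  have "discrete_in Ddet ?U"
    unfolding Ddet_def using PJ_det_eventually_nonzero[OF PJ]
      lft_den_det_eventually_nonzero[OF PJ pair not_vanishing]
    by (intro discrete_in_exceptions eventually_conj)
  define D where "D = Dp \<union> D\<Theta> \<union> Ddet"
  have D: "discrete_in D ?U"
    unfolding D_def by (intro discrete_in_Un Dp D\<Theta> \<open>discrete_in Ddet ?U\<close>)
  have dets: "det (\<Theta> z) \<noteq> 0 \<and> det (lft_den \<Theta> \<phi> \<psi> z) \<noteq> 0" if "z \<in> ?U - D" for z
    using that by (auto simp: D_def Ddet_def)
  have holo: "mholo \<Theta> (?U - D)" "mholo \<phi> (?U - D)" "mholo \<psi> (?U - D)"
    using holo_\<Theta> holo_pair by (auto elim!: mholo_subset simp: D_def)
  have "mholo (lft \<Theta> \<phi> \<psi>) (?U - D)"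
    unfolding lft_def[abs_def] using dets
    by (intro mholo_mult mholo_lft_num mholo_matrix_inv mholo_lft_den holo) auto
  moreover have "ineq1 \<Theta> (lft \<Theta> \<phi> \<psi>) z \<and> ineq2 \<alpha> \<Theta> (lft \<Theta> \<phi> \<psi>) z" if "z \<notin> \<real>" "z \<notin> D" for z
    using that nonreal_in_dom_alpha[OF that(1)] dets[of z]
    by (intro lft_inequalities psd_pair) (auto simp: D_def)
  ultimately show ?thesis
    using D holo dets by (intro exI[of _ D]) (simp add: lft_def)
qed

section \<open>Equivalent Stieltjes pairs\<close>

lemma pair_equiv_refl: "stieltjes_pair \<alpha> \<phi> \<psi> \<Longrightarrow> pair_equiv \<alpha> \<phi> \<psi> \<phi> \<psi>"
  by (elim stieltjes_pairE, unfold pair_equiv_def)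
    (intro exI[of _ "\<lambda>z. mat 1"] exI conjI mmero_const mholo_const ballI; simp)

lemma pair_equiv_sym:
  assumes "pair_equiv \<alpha> \<phi>1 \<psi>1 \<phi>2 \<psi>2"
  shows "pair_equiv \<alpha> \<phi>2 \<psi>2 \<phi>1 \<psi>1"
proof -
  let ?U = "dom_alpha \<alpha>"
  obtain g D where mero_g: "mmero g ?U" and D: "discrete_in D ?U"
    and holo: "mholo \<phi>1 (?U - D)" "mholo \<psi>1 (?U - D)" "mholo \<phi>2 (?U - D)" "mholo \<psi>2 (?U - D)"
      "mholo g (?U - D)"
    and eq: "\<forall>z\<in>?U - D. det (g z) \<noteq> 0 \<and> \<phi>2 z = \<phi>1 z ** g z \<and> \<psi>2 z = \<psi>1 z ** g z"
    using assms unfolding pair_equiv_def by blast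
  have "mmero (\<lambda>z. matrix_inv (g z)) ?U"
    using eq by (intro mmero_matrix_inv mero_g eventually_cosparse_if_discrete_in[OF open_dom_alpha D]) blast
  moreover have "mholo (\<lambda>z. matrix_inv (g z)) (?U - D)"
    using eq by (intro mholo_matrix_inv holo(5)) blast
  moreover have "det (matrix_inv (g z)) \<noteq> 0 \<and> \<phi>1 z = \<phi>2 z ** matrix_inv (g z) \<and> \<psi>1 z = \<psi>2 z ** matrix_inv (g z)"
    if "z \<in> ?U - D" for z
  proof -
    have "det (g z) \<noteq> 0"
      using eq that by blast
    thus ?thesis
      using eq that by (simp add: det_matrix_inv_nonzero matrix_mul_assoc[symmetric] matrix_inv_inverses(1))
  qed
  ultimately show ?thesis
    unfolding pair_equiv_def using D holo by blast
qed

lemma pair_equiv_trans: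
  assumes "pair_equiv \<alpha> \<phi>1 \<psi>1 \<phi>2 \<psi>2" "pair_equiv \<alpha> \<phi>2 \<psi>2 \<phi>3 \<psi>3"
  shows "pair_equiv \<alpha> \<phi>1 \<psi>1 \<phi>3 \<psi>3"
proof -
  let ?U = "dom_alpha \<alpha>"
  obtain g1 D1 where mero1: "mmero g1 ?U" and D1: "discrete_in D1 ?U"
    and holo1: "mholo \<phi>1 (?U - D1)" "mholo \<psi>1 (?U - D1)" "mholo g1 (?U - D1)"
    and eq1: "\<forall>z\<in>?U - D1. det (g1 z) \<noteq> 0 \<and> \<phi>2 z = \<phi>1 z ** g1 z \<and> \<psi>2 z = \<psi>1 z ** g1 z"
    using assms(1) unfolding pair_equiv_def by blast
  obtain g2 D2 where mero2: "mmero g2 ?U" and D2: "discrete_in D2 ?U"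
    and holo2: "mholo \<phi>3 (?U - D2)" "mholo \<psi>3 (?U - D2)" "mholo g2 (?U - D2)"
    and eq2: "\<forall>z\<in>?U - D2. det (g2 z) \<noteq> 0 \<and> \<phi>3 z = \<phi>2 z ** g2 z \<and> \<psi>3 z = \<psi>2 z ** g2 z"
    using assms(2) unfolding pair_equiv_def by blast
  have sub: "?U - (D1 \<union> D2) \<subseteq> ?U - D1" "?U - (D1 \<union> D2) \<subseteq> ?U - D2"
    by auto
  show ?thesis
    unfolding pair_equiv_def
    using eq1 eq2 mholo_subset[OF _ sub(1)] mholo_subset[OF _ sub(2)] holo1 holo2
    by (intro exI[of _ "\<lambda>z. g1 z ** g2 z"] exI[of _ "D1 \<union> D2"] conjI mmero_mult mero1 mero2
        discrete_in_Un D1 D2 mholo_mult ballI) (auto simp: det_mul matrix_mul_assoc)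
qed

lemma stieltjes_class_eq_iff_pair_equiv:
  assumes "stieltjes_pair \<alpha> \<phi>2 \<psi>2"
  shows "stieltjes_class \<alpha> \<phi>1 \<psi>1 = stieltjes_class \<alpha> \<phi>2 \<psi>2 \<longleftrightarrow> pair_equiv \<alpha> \<phi>1 \<psi>1 \<phi>2 \<psi>2"
proof
  assume classes: "stieltjes_class \<alpha> \<phi>1 \<psi>1 = stieltjes_class \<alpha> \<phi>2 \<psi>2"
  have "(\<phi>2, \<psi>2) \<in> stieltjes_class \<alpha> \<phi>2 \<psi>2"
    using assms pair_equiv_refl[OF assms] by (simp add: stieltjes_class_def)
  hence "(\<phi>2, \<psi>2) \<in> stieltjes_class \<alpha> \<phi>1 \<psi>1"
    unfolding classes .
  thus "pair_equiv \<alpha> \<phi>1 \<psi>1 \<phi>2 \<psi>2"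
    by (simp add: stieltjes_class_def)
next
  assume "pair_equiv \<alpha> \<phi>1 \<psi>1 \<phi>2 \<psi>2"
  thus "stieltjes_class \<alpha> \<phi>1 \<psi>1 = stieltjes_class \<alpha> \<phi>2 \<psi>2"
    unfolding stieltjes_class_def by (blast intro: pair_equiv_trans pair_equiv_sym)
qed

lemma lft_right_factor_invariant:
  assumes "det (lft_den \<Theta> \<phi>1 \<psi>1 z) \<noteq> 0" "det G \<noteq> 0"
    and "\<phi>2 z = \<phi>1 z ** G" "\<psi>2 z = \<psi>1 z ** G"
  shows "lft \<Theta> \<phi>2 \<psi>2 z = lft \<Theta> \<phi>1 \<psi>1 z"
proof -
  have "lft_num \<Theta> \<phi>2 \<psi>2 z = lft_num \<Theta> \<phi>1 \<psi>1 z ** G" "lft_den \<Theta> \<phi>2 \<psi>2 z = lft_den \<Theta> \<phi>1 \<psi>1 z ** G"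
    by (simp_all add: lft_num_def lft_den_def assms(3,4) matrix_mul_assoc matrix_add_rdistrib)
  hence "lft \<Theta> \<phi>2 \<psi>2 z = lft_num \<Theta> \<phi>1 \<psi>1 z ** (G ** (matrix_inv G ** matrix_inv (lft_den \<Theta> \<phi>1 \<psi>1 z)))"
    by (simp add: lft_def matrix_inv_mult[OF assms(1,2)] matrix_mul_assoc)
  thus ?thesis
    by (simp add: lft_def matrix_inv_cancel_left(1)[OF assms(2)])
qed

lemma right_factor_of_lft_eq:
  assumes "det (\<Theta> z) \<noteq> 0" "det (lft_den \<Theta> \<phi>1 \<psi>1 z) \<noteq> 0" "det (lft_den \<Theta> \<phi>2 \<psi>2 z) \<noteq> 0"
    and "lft \<Theta> \<phi>1 \<psi>1 z = lft \<Theta> \<phi>2 \<psi>2 z"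
  shows "stack (\<phi>2 z) (\<psi>2 z) = stack (\<phi>1 z) (\<psi>1 z) ** (matrix_inv (lft_den \<Theta> \<phi>1 \<psi>1 z) ** lft_den \<Theta> \<phi>2 \<psi>2 z)"
proof -
  have "stack (\<phi>2 z) (\<psi>2 z) = stack (\<phi>2 z) (\<psi>2 z) ** matrix_inv (lft_den \<Theta> \<phi>2 \<psi>2 z) ** lft_den \<Theta> \<phi>2 \<psi>2 z"
    by (simp add: matrix_mul_assoc[symmetric] matrix_inv_inverses(2)[OF assms(3)])
  also have "\<dots> = stack (\<phi>1 z) (\<psi>1 z) ** matrix_inv (lft_den \<Theta> \<phi>1 \<psi>1 z) ** lft_den \<Theta> \<phi>2 \<psi>2 z"
    using matrix_inv_stack_lft[OF assms(1,2)] matrix_inv_stack_lft[OF assms(1,3)] assms(4) by simp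
  finally show ?thesis
    by (simp add: matrix_mul_assoc)
qed

lemma pair_equiv_imp_lft_eq:
  assumes "pair_equiv \<alpha> \<phi>1 \<psi>1 \<phi>2 \<psi>2"
    and "eventually (\<lambda>z. det (lft_den \<Theta> \<phi>1 \<psi>1 z) \<noteq> 0) (cosparse (dom_alpha \<alpha>))"
  shows "mero_eq (dom_alpha \<alpha>) (lft \<Theta> \<phi>1 \<psi>1) (lft \<Theta> \<phi>2 \<psi>2)"
proof -
  obtain g D where D: "discrete_in D (dom_alpha \<alpha>)"
    and eq: "\<forall>z\<in>dom_alpha \<alpha> - D. det (g z) \<noteq> 0 \<and> \<phi>2 z = \<phi>1 z ** g z \<and> \<psi>2 z = \<psi>1 z ** g z"
    using assms(1) unfolding pair_equiv_def by blast
  have "eventually (\<lambda>z. det (g z) \<noteq> 0 \<and> \<phi>2 z = \<phi>1 z ** g z \<and> \<psi>2 z = \<psi>1 z ** g z) (cosparse (dom_alpha \<alpha>))"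
    by (rule eventually_cosparse_if_discrete_in[OF open_dom_alpha D eq])
  hence "eventually (\<lambda>z. lft \<Theta> \<phi>1 \<psi>1 z = lft \<Theta> \<phi>2 \<psi>2 z) (cosparse (dom_alpha \<alpha>))"
    using assms(2) by eventually_elim (metis lft_right_factor_invariant)
  thus ?thesis
    by (simp add: mero_eq_iff open_dom_alpha)
qed

lemma lft_eq_imp_pair_equiv:
  assumes PJ: "PJ \<alpha> \<Theta>" and pair1: "stieltjes_pair \<alpha> \<phi>1 \<psi>1" and pair2: "stieltjes_pair \<alpha> \<phi>2 \<psi>2"
    and den1: "eventually (\<lambda>z. det (lft_den \<Theta> \<phi>1 \<psi>1 z) \<noteq> 0) (cosparse (dom_alpha \<alpha>))"
    and den2: "eventually (\<lambda>z. det (lft_den \<Theta> \<phi>2 \<psi>2 z) \<noteq> 0) (cosparse (dom_alpha \<alpha>))"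
    and lft_eq: "mero_eq (dom_alpha \<alpha>) (lft \<Theta> \<phi>1 \<psi>1) (lft \<Theta> \<phi>2 \<psi>2)"
  shows "pair_equiv \<alpha> \<phi>1 \<psi>1 \<phi>2 \<psi>2"
proof -
  let ?U = "dom_alpha \<alpha>"
  obtain D1 where D1: "discrete_in D1 ?U" and holo1: "mholo \<phi>1 (?U - D1)" "mholo \<psi>1 (?U - D1)"
    using stieltjes_pairE[OF pair1] by metis
  obtain D2 where D2: "discrete_in D2 ?U" and holo2: "mholo \<phi>2 (?U - D2)" "mholo \<psi>2 (?U - D2)"
    using stieltjes_pairE[OF pair2] by metis
  obtain D\<Theta> where D\<Theta>: "discrete_in D\<Theta> ?U" and holo_\<Theta>: "mholo \<Theta> (?U - D\<Theta>)"
    using PJE[OF PJ] by metis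
  define good where "good z \<longleftrightarrow> lft \<Theta> \<phi>1 \<psi>1 z = lft \<Theta> \<phi>2 \<psi>2 z \<and> det (\<Theta> z) \<noteq> 0 \<and>
      det (lft_den \<Theta> \<phi>1 \<psi>1 z) \<noteq> 0 \<and> det (lft_den \<Theta> \<phi>2 \<psi>2 z) \<noteq> 0" for z
  have "discrete_in {z\<in>?U. \<not> good z} ?U"
    unfolding good_def using lft_eq PJ_det_eventually_nonzero[OF PJ] den1 den2
    by (intro discrete_in_exceptions eventually_conj) (simp_all add: mero_eq_iff open_dom_alpha)
  define D where "D = D1 \<union> D2 \<union> D\<Theta> \<union> {z\<in>?U. \<not> good z}"
  have D: "discrete_in D ?U"
    unfolding D_def by (intro discrete_in_Un D1 D2 D\<Theta> \<open>discrete_in {z\<in>?U. \<not> good z} ?U\<close>)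
  have good: "good z" if "z \<in> ?U - D" for z
    using that by (auto simp: D_def)
  have holo: "mholo \<phi>1 (?U - D)" "mholo \<psi>1 (?U - D)" "mholo \<phi>2 (?U - D)" "mholo \<psi>2 (?U - D)"
    "mholo \<Theta> (?U - D)"
    using holo1 holo2 holo_\<Theta> by (auto elim!: mholo_subset simp: D_def)
  define g where "g z = matrix_inv (lft_den \<Theta> \<phi>1 \<psi>1 z) ** lft_den \<Theta> \<phi>2 \<psi>2 z" for z
  have "mmero g ?U"
    using stieltjes_pair_meromorphic[OF pair1] stieltjes_pair_meromorphic[OF pair2]
    unfolding g_def[abs_def]
    by (intro mmero_mult mmero_matrix_inv mmero_lft_den PJ_meromorphic[OF PJ] den1) auto
  moreover have "mholo g (?U - D)"
    unfolding g_def[abs_def] using good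
    by (intro mholo_mult mholo_matrix_inv mholo_lft_den holo) (auto simp: good_def)
  moreover have "det (g z) \<noteq> 0 \<and> \<phi>2 z = \<phi>1 z ** g z \<and> \<psi>2 z = \<psi>1 z ** g z" if "z \<in> ?U - D" for z
    using good[OF that] right_factor_of_lft_eq[of \<Theta> z \<phi>1 \<psi>1 \<phi>2 \<psi>2]
    by (simp add: good_def g_def stack_mult stack_eq_iff det_mul det_matrix_inv_nonzero)
  ultimately show ?thesis
    unfolding pair_equiv_def using D holo by blast
qed

lemma stieltjes_class_eq_iff_lft_eq:
  assumes PJ: "PJ \<alpha> \<Theta>" and "stieltjes_pair \<alpha> \<phi>1 \<psi>1" "stieltjes_pair \<alpha> \<phi>2 \<psi>2"
    and "\<not> vanishes_identically (dom_alpha \<alpha>) (\<lambda>z. det (lft_den \<Theta> \<phi>1 \<psi>1 z))"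
    and "\<not> vanishes_identically (dom_alpha \<alpha>) (\<lambda>z. det (lft_den \<Theta> \<phi>2 \<psi>2 z))"
  shows "stieltjes_class \<alpha> \<phi>1 \<psi>1 = stieltjes_class \<alpha> \<phi>2 \<psi>2 \<longleftrightarrow>
    mero_eq (dom_alpha \<alpha>) (lft \<Theta> \<phi>1 \<psi>1) (lft \<Theta> \<phi>2 \<psi>2)"
  using assms lft_den_det_eventually_nonzero[OF PJ]
  by (auto simp: stieltjes_class_eq_iff_pair_equiv intro: pair_equiv_imp_lft_eq lft_eq_imp_pair_equiv)

theorem proposition10p16:
  fixes \<alpha> :: real and \<Theta> :: "complex \<Rightarrow> complex^('q::finite + 'q)^('q + 'q)"
  assumes "PJ' \<alpha> \<Theta>"
  shows
  \<comment> \<open>(a)\<close>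
  "(\<not> vanishes_identically (dom_alpha \<alpha>) (\<lambda>z. det (\<Theta> z)) \<and>
    mmero (\<lambda>z. matrix_inv (\<Theta> z)) (dom_alpha \<alpha>))
  \<comment> \<open>(b)\<close>
  \<and> (\<forall>f :: complex \<Rightarrow> complex^'q^'q. mmero f (dom_alpha \<alpha>) \<longrightarrow>
      (\<forall>D. discrete_in D (dom_alpha \<alpha>) \<and> mholo f (dom_alpha \<alpha> - D) \<and> mholo \<Theta> (dom_alpha \<alpha> - D) \<and>
           (\<forall>z\<in>dom_alpha \<alpha> - D. det (\<Theta> z) \<noteq> 0) \<and>
           (\<forall>z. z \<notin> \<real> \<and> z \<notin> D \<longrightarrow> ineq1 \<Theta> f z \<and> ineq2 \<alpha> \<Theta> f z) \<longrightarrow>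
         (\<exists>\<phi> \<psi>. stieltjes_pair \<alpha> \<phi> \<psi> \<and> mholo \<phi> (dom_alpha \<alpha> - D) \<and> mholo \<psi> (dom_alpha \<alpha> - D) \<and>
            (\<forall>z\<in>dom_alpha \<alpha> - D. det (lft_den \<Theta> \<phi> \<psi> z) \<noteq> 0 \<and>
               f z = lft_num \<Theta> \<phi> \<psi> z ** matrix_inv (lft_den \<Theta> \<phi> \<psi> z)))))
  \<comment> \<open>(c)\<close>
  \<and> (\<forall>\<phi> \<psi>. stieltjes_pair \<alpha> \<phi> \<psi> \<and>
        \<not> vanishes_identically (dom_alpha \<alpha>) (\<lambda>z. det (lft_den \<Theta> \<phi> \<psi> z)) \<longrightarrow>
      (\<exists>D. discrete_in D (dom_alpha \<alpha>) \<and>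
         mholo \<Theta> (dom_alpha \<alpha> - D) \<and> mholo \<phi> (dom_alpha \<alpha> - D) \<and> mholo \<psi> (dom_alpha \<alpha> - D) \<and>
         (\<forall>z\<in>dom_alpha \<alpha> - D. det (\<Theta> z) \<noteq> 0 \<and> det (lft_den \<Theta> \<phi> \<psi> z) \<noteq> 0) \<and>
         mholo (lft \<Theta> \<phi> \<psi>) (dom_alpha \<alpha> - D) \<and>
         (\<forall>z. z \<notin> \<real> \<and> z \<notin> D \<longrightarrow> ineq1 \<Theta> (lft \<Theta> \<phi> \<psi>) z \<and> ineq2 \<alpha> \<Theta> (lft \<Theta> \<phi> \<psi>) z) \<and>
         (\<forall>z\<in>dom_alpha \<alpha> - D.
            lft \<Theta> \<phi> \<psi> z = lft_num \<Theta> \<phi> \<psi> z ** matrix_inv (lft_den \<Theta> \<phi> \<psi> z))))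
  \<comment> \<open>(d)\<close>
  \<and> (\<forall>\<phi>1 \<psi>1 \<phi>2 \<psi>2. stieltjes_pair \<alpha> \<phi>1 \<psi>1 \<and> stieltjes_pair \<alpha> \<phi>2 \<psi>2 \<and>
        \<not> vanishes_identically (dom_alpha \<alpha>) (\<lambda>z. det (lft_den \<Theta> \<phi>1 \<psi>1 z)) \<and>
        \<not> vanishes_identically (dom_alpha \<alpha>) (\<lambda>z. det (lft_den \<Theta> \<phi>2 \<psi>2 z)) \<longrightarrow>
      (stieltjes_class \<alpha> \<phi>1 \<psi>1 = stieltjes_class \<alpha> \<phi>2 \<psi>2 \<longleftrightarrow>
       mero_eq (dom_alpha \<alpha>) (lft \<Theta> \<phi>1 \<psi>1) (lft \<Theta> \<phi>2 \<psi>2)))"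
proof -
  have PJ: "PJ \<alpha> \<Theta>"
    using assms by (simp add: PJ'_def)
  show ?thesis
    by (intro conjI allI impI; (elim conjE)?;
        rule PJ_det_not_vanishing[OF PJ] PJ_matrix_inv_meromorphic[OF PJ]
          stieltjes_pair_of_inequalities[OF PJ] lft_of_stieltjes_pair[OF PJ]
          stieltjes_class_eq_iff_lft_eq[OF PJ]; assumption)
qed

end
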